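(* Let $G$ be a discrete group and let $X$ be a minimal, essentially free $G$-flow. Then $\tilde S_G(X)$ is a free $G$-flow. Moreover, if $G$ is countable, then $\tilde S_G(X)$ admits a metrizable factor which is also free.
   Context: A $G$-flow is essentially free if for every $g\neq e$ the set of points fixed by $g$ has empty interior, and free if every point has trivial stabilizer. For a minimal $G$-flow $X$ ($G$ discrete), $\tilde S_G(X)$ denotes the Stone space of the Boolean algebra of regular open subsets of $X$, with the induced $G$-action; the map $\pi_X\colon\tilde S_G(X)\to X$ sends an ultrafilter $p$ to the unique $x\in X$ all of whose regular open neighborhoods belong to $p$. ($\tilde S_G(X)$ is the universal highly proximal extension of $X$.) A factor of a flow $Y$ is a flow $Z$ with a continuous surjective $G$-map $Y\to Z$. *)

theory Defs
  imports "HOL-Analysis.Analysis" "HOL-Algebra.Group"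
begin

definition G_flow :: "('g, 'b) monoid_scheme \<Rightarrow> 'x topology \<Rightarrow> ('g \<Rightarrow> 'x \<Rightarrow> 'x) \<Rightarrow> bool" where
  "G_flow G X act \<longleftrightarrow> group G \<and> compact_space X \<and> Hausdorff_space X
     \<and> (\<forall>g\<in>carrier G. continuous_map X X (act g))
     \<and> (\<forall>x\<in>topspace X. act \<one>\<^bsub>G\<^esub> x = x)
     \<and> (\<forall>g\<in>carrier G. \<forall>h\<in>carrier G. \<forall>x\<in>topspace X.
           act (g \<otimes>\<^bsub>G\<^esub> h) x = act g (act h x))"

definition minimal_flow :: "('g, 'b) monoid_scheme \<Rightarrow> 'x topology \<Rightarrow> ('g \<Rightarrow> 'x \<Rightarrow> 'x) \<Rightarrow> bool" where
  "minimal_flow G X act \<longleftrightarrow> G_flow G X act \<and> topspace X \<noteq> {}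
     \<and> (\<forall>Y. closedin X Y \<and> Y \<noteq> {} \<and> (\<forall>g\<in>carrier G. act g ` Y \<subseteq> Y) \<longrightarrow> Y = topspace X)"

definition essentially_free :: "('g, 'b) monoid_scheme \<Rightarrow> 'x topology \<Rightarrow> ('g \<Rightarrow> 'x \<Rightarrow> 'x) \<Rightarrow> bool" where
  "essentially_free G X act \<longleftrightarrow>
     (\<forall>g\<in>carrier G. g \<noteq> \<one>\<^bsub>G\<^esub> \<longrightarrow> X interior_of {x\<in>topspace X. act g x = x} = {})"

definition free_flow :: "('g, 'b) monoid_scheme \<Rightarrow> 'x topology \<Rightarrow> ('g \<Rightarrow> 'x \<Rightarrow> 'x) \<Rightarrow> bool" where
  "free_flow G X act \<longleftrightarrow> (\<forall>x\<in>topspace X. \<forall>g\<in>carrier G. act g x = x \<longrightarrow> g = \<one>\<^bsub>G\<^esub>)"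

definition regular_open :: "'x topology \<Rightarrow> 'x set \<Rightarrow> bool" where
  "regular_open X U \<longleftrightarrow> X interior_of (X closure_of U) = U"

definition RO :: "'x topology \<Rightarrow> 'x set set" where
  "RO X = {U. regular_open X U}"

definition RO_filter :: "'x topology \<Rightarrow> 'x set set \<Rightarrow> bool" where
  "RO_filter X F \<longleftrightarrow> F \<subseteq> RO X \<and> topspace X \<in> F \<and> {} \<notin> F
     \<and> (\<forall>U\<in>F. \<forall>V\<in>F. U \<inter> V \<in> F)
     \<and> (\<forall>U\<in>F. \<forall>V\<in>RO X. U \<subseteq> V \<longrightarrow> V \<in> F)"

definition RO_ultrafilter :: "'x topology \<Rightarrow> 'x set set \<Rightarrow> bool" where
  "RO_ultrafilter X p \<longleftrightarrow> RO_filter X p \<and> (\<forall>F. RO_filter X F \<and> p \<subseteq> F \<longrightarrow> F = p)"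

text \<open>The Stone space of RO(X): ultrafilters, with basic clopen sets [U] = {p. U \<in> p}.\<close>
definition StoneRO :: "'x topology \<Rightarrow> 'x set set topology" where
  "StoneRO X = subtopology
      (topology_generated_by {{p. RO_ultrafilter X p \<and> U \<in> p} | U. U \<in> RO X})
      {p. RO_ultrafilter X p}"

definition StoneRO_act :: "('g \<Rightarrow> 'x \<Rightarrow> 'x) \<Rightarrow> 'g \<Rightarrow> 'x set set \<Rightarrow> 'x set set" where
  "StoneRO_act act g p = (\<lambda>U. act g ` U) ` p"

definition factor_map ::
  "('g, 'b) monoid_scheme \<Rightarrow> 'y topology \<Rightarrow> ('g \<Rightarrow> 'y \<Rightarrow> 'y) \<Rightarrow> 'z topology \<Rightarrow> ('g \<Rightarrow> 'z \<Rightarrow> 'z)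
    \<Rightarrow> ('y \<Rightarrow> 'z) \<Rightarrow> bool" where
  "factor_map G Y actY Z actZ f \<longleftrightarrow> G_flow G Z actZ \<and> continuous_map Y Z f
     \<and> f ` topspace Y = topspace Z
     \<and> (\<forall>g\<in>carrier G. \<forall>y\<in>topspace Y. f (actY g y) = actZ g (f y))"

end

theory Submission
  imports Defs
begin

text \<open>Fix \<open>g \<noteq> 1\<close>. Essential freeness lets every nonempty regular open set be shrunk to one
  disjoint from its \<open>g\<close>-translate, so a regular open \<open>V\<close> that is maximal with \<open>V \<inter> gV = {}\<close>
  (Zorn) has \<open>V \<union> gV \<union> g\<^sup>-\<^sup>1V\<close> dense. Hence every ultrafilter of regular open sets contains one
  of these three sets \<open>A\<close>, and \<open>A \<inter> gA = {}\<close> shows that \<open>g\<close> moves the ultrafilter. For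
  countable \<open>G\<close> the \<open>G\<close>-translates of all these witnesses form a countable invariant family
  \<open>\<B>\<close>; remembering only \<open>p \<inter> \<B>\<close>, i.e. the indicator sequence of \<open>p\<close> along an enumeration
  of \<open>\<B>\<close>, gives a metrizable factor on which the same witnesses still act freely.\<close>

section \<open>Regular open sets\<close>

lemma RO_subset_topspace: "U \<in> RO X \<Longrightarrow> U \<subseteq> topspace X"
  by (metis RO_def mem_Collect_eq regular_open_def interior_of_subset_topspace)

lemma RO_openin: "U \<in> RO X \<Longrightarrow> openin X U"
  by (metis RO_def mem_Collect_eq regular_open_def openin_interior_of)

lemma topspace_in_RO: "topspace X \<in> RO X"
  by (simp add: RO_def regular_open_def)

lemma openin_subset_interior_closure: "openin X U \<Longrightarrow> U \<subseteq> X interior_of (X closure_of U)"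
  by (simp add: interior_of_maximal closure_of_subset openin_subset)

lemma interior_closure_in_RO: "X interior_of (X closure_of S) \<in> RO X"
proof -
  let ?A = "X interior_of (X closure_of S)"
  have "X interior_of (X closure_of ?A) \<subseteq> X interior_of (X closure_of (X closure_of S))"
    by (intro interior_of_mono closure_of_mono interior_of_subset)
  then have "X interior_of (X closure_of ?A) \<subseteq> ?A"
    by simp
  then show ?thesis
    using openin_subset_interior_closure[of X ?A] by (auto simp: RO_def regular_open_def)
qed

lemma RO_Int:
  assumes U: "U \<in> RO X" and V: "V \<in> RO X"
  shows "U \<inter> V \<in> RO X"
proof -
  have "X interior_of (X closure_of (U \<inter> V)) \<subseteq> X interior_of (X closure_of U)"
       "X interior_of (X closure_of (U \<inter> V)) \<subseteq> X interior_of (X closure_of V)"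
    by (intro interior_of_mono closure_of_mono; blast)+
  moreover have "U \<inter> V \<subseteq> X interior_of (X closure_of (U \<inter> V))"
    using U V by (intro openin_subset_interior_closure) (auto simp: RO_openin)
  ultimately show ?thesis
    using U V by (auto simp: RO_def regular_open_def)
qed

lemma interior_of_closedin_in_RO:
  assumes "closedin X C"
  shows "X interior_of C \<in> RO X"
proof -
  have "X closure_of (X interior_of C) \<subseteq> C"
    using assms by (simp add: closure_of_minimal interior_of_subset)
  then have "X interior_of (X closure_of (X interior_of C)) \<subseteq> X interior_of C"
    by (rule interior_of_mono)
  then show ?thesis
    using openin_subset_interior_closure[of X "X interior_of C"] by (auto simp: RO_def regular_open_def)
qed

lemma interior_complement_in_RO: "U \<in> RO X \<Longrightarrow> X interior_of (topspace X - U) \<in> RO X"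
  by (simp add: interior_of_closedin_in_RO closedin_diff RO_openin)

lemma interior_closure_disjoint:
  assumes "openin X A" "openin X B" "A \<inter> B = {}"
  shows "X interior_of (X closure_of A) \<inter> X interior_of (X closure_of B) = {}"
proof -
  have "B \<inter> X closure_of A = {}"
    using assms by (simp add: openin_Int_closure_of_eq_empty Int_commute)
  then have "B \<inter> X interior_of (X closure_of A) = {}"
    using interior_of_subset[of X "X closure_of A"] by blast
  then have "X interior_of (X closure_of A) \<inter> X closure_of B = {}"
    using openin_Int_closure_of_eq_empty[OF openin_interior_of, of X "X closure_of A" B] by blast
  then show ?thesis
    using interior_of_subset[of X "X closure_of B"] by blast
qed

lemma homeomorphic_map_interior_closure:
  assumes "homeomorphic_map X Y h" "S \<subseteq> topspace X"
  shows "Y interior_of (Y closure_of (h ` S)) = h ` (X interior_of (X closure_of S))"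
  using assms by (simp add: homeomorphic_map_closure_of homeomorphic_map_interior_of closure_of_subset_topspace)

lemma homeomorphic_image_in_RO:
  assumes "homeomorphic_map X Y h" "U \<in> RO X"
  shows "h ` U \<in> RO Y"
  using homeomorphic_map_interior_closure[OF assms(1) RO_subset_topspace[OF assms(2)]] assms(2)
  by (simp add: RO_def regular_open_def)

lemma homeomorphic_maps_image_cancel:
  assumes "homeomorphic_maps X Y h k" "U \<subseteq> topspace X"
  shows "k ` h ` U = U"
proof -
  have "\<And>x. x \<in> U \<Longrightarrow> k (h x) = x"
    using assms unfolding homeomorphic_maps_def by blast
  then show ?thesis
    by (force simp: image_image)
qed

lemma homeomorphic_maps_image_Int:
  "homeomorphic_maps X Y h k \<Longrightarrow> U \<subseteq> topspace X \<Longrightarrow> V \<subseteq> topspace X \<Longrightarrow> h ` (U \<inter> V) = h ` U \<inter> h ` V"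
  by (meson homeomorphic_maps_imp_map homeomorphic_imp_injective_map inj_on_image_Int)

section \<open>Ultrafilters of regular open sets\<close>

lemma RO_ultrafilter_in_RO: "RO_ultrafilter X p \<Longrightarrow> U \<in> p \<Longrightarrow> U \<in> RO X"
  by (auto simp: RO_ultrafilter_def RO_filter_def)

lemma RO_ultrafilter_topspace: "RO_ultrafilter X p \<Longrightarrow> topspace X \<in> p"
  by (simp add: RO_ultrafilter_def RO_filter_def)

lemma RO_ultrafilter_Int: "RO_ultrafilter X p \<Longrightarrow> U \<in> p \<Longrightarrow> V \<in> p \<Longrightarrow> U \<inter> V \<in> p"
  by (simp add: RO_ultrafilter_def RO_filter_def)

lemma RO_ultrafilter_mono: "RO_ultrafilter X p \<Longrightarrow> U \<in> p \<Longrightarrow> V \<in> RO X \<Longrightarrow> U \<subseteq> V \<Longrightarrow> V \<in> p"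
  by (simp add: RO_ultrafilter_def RO_filter_def)

lemma RO_ultrafilter_Int_nonempty: "RO_ultrafilter X p \<Longrightarrow> U \<in> p \<Longrightarrow> V \<in> p \<Longrightarrow> U \<inter> V \<noteq> {}"
  by (metis RO_ultrafilter_Int RO_ultrafilter_def RO_filter_def)

lemma RO_filter_Union_directed:
  assumes "\<H> \<noteq> {}" and filters: "\<And>H. H \<in> \<H> \<Longrightarrow> RO_filter X H"
    and directed: "\<And>H1 H2. H1 \<in> \<H> \<Longrightarrow> H2 \<in> \<H> \<Longrightarrow> \<exists>H\<in>\<H>. H1 \<union> H2 \<subseteq> H"
  shows "RO_filter X (\<Union>\<H>)"
  unfolding RO_filter_def
proof (intro conjI ballI allI impI)
  show "\<Union>\<H> \<subseteq> RO X" "{} \<notin> \<Union>\<H>" "topspace X \<in> \<Union>\<H>"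
    using assms(1) filters unfolding RO_filter_def by blast+
next
  fix U V assume "U \<in> \<Union>\<H>" "V \<in> \<Union>\<H>"
  then obtain H1 H2 where "H1 \<in> \<H>" "H2 \<in> \<H>" "U \<in> H1" "V \<in> H2"
    by blast
  then obtain H where "H \<in> \<H>" "U \<in> H" "V \<in> H"
    using directed by blast
  then show "U \<inter> V \<in> \<Union>\<H>"
    using filters[of H] unfolding RO_filter_def by blast
next
  fix U V assume "U \<in> \<Union>\<H>" "V \<in> RO X" "U \<subseteq> V"
  moreover obtain H where "H \<in> \<H>" "U \<in> H"
    using \<open>U \<in> \<Union>\<H>\<close> by blast
  ultimately show "V \<in> \<Union>\<H>"
    using filters[of H] unfolding RO_filter_def by blast
qed

lemma RO_filter_common_members:
  assumes "S \<noteq> {}" and ultra: "\<And>q. q \<in> S \<Longrightarrow> RO_ultrafilter X q"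
  shows "RO_filter X {V \<in> RO X. \<forall>q\<in>S. V \<in> q}"
  unfolding RO_filter_def
proof (intro conjI ballI allI impI)
  show "{V \<in> RO X. \<forall>q\<in>S. V \<in> q} \<subseteq> RO X"
    by blast
  show "topspace X \<in> {V \<in> RO X. \<forall>q\<in>S. V \<in> q}"
    using topspace_in_RO ultra RO_ultrafilter_topspace by blast
  show "{} \<notin> {V \<in> RO X. \<forall>q\<in>S. V \<in> q}"
    using assms RO_ultrafilter_Int_nonempty[of X _ "{}" "{}"] by blast
next
  fix U V assume "U \<in> {V \<in> RO X. \<forall>q\<in>S. V \<in> q}" "V \<in> {V \<in> RO X. \<forall>q\<in>S. V \<in> q}"
  then show "U \<inter> V \<in> {V \<in> RO X. \<forall>q\<in>S. V \<in> q}"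
    by (auto intro: RO_Int RO_ultrafilter_Int[OF ultra])
next
  fix U V assume "U \<in> {V \<in> RO X. \<forall>q\<in>S. V \<in> q}" "V \<in> RO X" "U \<subseteq> V"
  then show "V \<in> {V \<in> RO X. \<forall>q\<in>S. V \<in> q}"
    using ultra RO_ultrafilter_mono by blast
qed

lemma RO_ultrafilter_exists:
  assumes "RO_filter X F"
  obtains p where "RO_ultrafilter X p" "F \<subseteq> p"
proof -
  have "\<exists>M\<in>{H. RO_filter X H \<and> F \<subseteq> H}. \<forall>H\<in>{H. RO_filter X H \<and> F \<subseteq> H}. M \<subseteq> H \<longrightarrow> H = M"
  proof (rule subset_Zorn)
    fix C assume C: "subset.chain {H. RO_filter X H \<and> F \<subseteq> H} C"
    show "\<exists>U\<in>{H. RO_filter X H \<and> F \<subseteq> H}. \<forall>H\<in>C. H \<subseteq> U"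
    proof (cases "C = {}")
      case True
      then show ?thesis
        using assms by blast
    next
      case False
      have "\<exists>H\<in>C. H1 \<union> H2 \<subseteq> H" if H12: "H1 \<in> C" "H2 \<in> C" for H1 H2
      proof -
        have "H1 \<subseteq> H2 \<or> H2 \<subseteq> H1"
          using C H12 unfolding subset.chain_def by blast
        then show ?thesis
          using H12 by blast
      qed
      then have "RO_filter X (\<Union>C)"
        using C False by (intro RO_filter_Union_directed) (auto simp: subset.chain_def)
      moreover have "F \<subseteq> \<Union>C"
        using C False unfolding subset.chain_def by blast
      ultimately show ?thesis
        by blast
    qed
  qed
  then obtain p where p: "RO_filter X p" "F \<subseteq> p"
    and maximal: "\<And>H. RO_filter X H \<Longrightarrow> F \<subseteq> H \<Longrightarrow> p \<subseteq> H \<Longrightarrow> H = p"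
    by auto
  have "RO_ultrafilter X p"
    unfolding RO_ultrafilter_def using p maximal by blast
  then show ?thesis
    using that p(2) by blast
qed

lemma RO_ultrafilter_disjoint_member:
  assumes p: "RO_ultrafilter X p" and U: "U \<in> RO X" "U \<notin> p"
  shows "\<exists>W\<in>p. W \<inter> U = {}"
proof (rule ccontr)
  assume meets: "\<not> (\<exists>W\<in>p. W \<inter> U = {})"
  define H where "H = {V \<in> RO X. \<exists>W\<in>p. W \<inter> U \<subseteq> V}"
  have "RO_filter X H"
    unfolding RO_filter_def
  proof (intro conjI ballI allI impI)
    show "H \<subseteq> RO X" "topspace X \<in> H"
      using p RO_ultrafilter_topspace by (auto simp: H_def topspace_in_RO)
    show "{} \<notin> H"
      using meets by (auto simp: H_def)
  next
    fix A B assume "A \<in> H" "B \<in> H"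
    then obtain W1 W2 where "W1 \<in> p" "W1 \<inter> U \<subseteq> A" "W2 \<in> p" "W2 \<inter> U \<subseteq> B" "A \<in> RO X" "B \<in> RO X"
      by (auto simp: H_def)
    then show "A \<inter> B \<in> H"
      using p unfolding H_def by (intro CollectI conjI RO_Int bexI[of _ "W1 \<inter> W2"] RO_ultrafilter_Int) auto
  qed (auto simp: H_def)
  moreover have "p \<subseteq> H"
    using p RO_ultrafilter_in_RO by (auto simp: H_def)
  ultimately have "H = p"
    using p by (simp add: RO_ultrafilter_def)
  moreover have "U \<in> H"
    using U p RO_ultrafilter_topspace by (auto simp: H_def)
  ultimately show False
    using U by simp
qed

lemma RO_ultrafilter_complement:
  assumes p: "RO_ultrafilter X p" and U: "U \<in> RO X"
  shows "X interior_of (topspace X - U) \<in> p \<longleftrightarrow> U \<notin> p"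
proof
  assume "X interior_of (topspace X - U) \<in> p"
  then show "U \<notin> p"
    using RO_ultrafilter_Int_nonempty[OF p] interior_of_subset[of X "topspace X - U"] by blast
next
  assume "U \<notin> p"
  then obtain W where W: "W \<in> p" "W \<inter> U = {}"
    using RO_ultrafilter_disjoint_member[OF p U] by blast
  then have "W \<subseteq> X interior_of (topspace X - U)"
    using p by (intro interior_of_maximal) (auto dest: RO_ultrafilter_in_RO RO_subset_topspace RO_openin)
  then show "X interior_of (topspace X - U) \<in> p"
    using W p U RO_ultrafilter_mono interior_complement_in_RO by blast
qed

lemma RO_ultrafilter_avoiding:
  assumes \<C>: "\<C> \<subseteq> RO X"
    and finite_avoided: "\<And>C. finite C \<Longrightarrow> C \<subseteq> \<C> \<Longrightarrow> \<exists>q. RO_ultrafilter X q \<and> C \<inter> q = {}"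
  shows "\<exists>p. RO_ultrafilter X p \<and> \<C> \<inter> p = {}"
proof -
  define F where "F C = {V \<in> RO X. \<forall>q\<in>{q. RO_ultrafilter X q \<and> C \<inter> q = {}}. V \<in> q}" for C
  have "RO_filter X (\<Union>C\<in>{C. finite C \<and> C \<subseteq> \<C>}. F C)"
  proof (rule RO_filter_Union_directed)
    show "F ` {C. finite C \<and> C \<subseteq> \<C>} \<noteq> {}"
      by blast
    show "RO_filter X H" if H: "H \<in> F ` {C. finite C \<and> C \<subseteq> \<C>}" for H
    proof -
      obtain C where "finite C" "C \<subseteq> \<C>" "H = F C"
        using H by blast
      moreover have "{q. RO_ultrafilter X q \<and> C \<inter> q = {}} \<noteq> {}"
        using finite_avoided[OF \<open>finite C\<close> \<open>C \<subseteq> \<C>\<close>] by blast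
      then have "RO_filter X (F C)"
        unfolding F_def by (rule RO_filter_common_members) simp
      ultimately show ?thesis
        by simp
    qed
    show "\<exists>H\<in>F ` {C. finite C \<and> C \<subseteq> \<C>}. H1 \<union> H2 \<subseteq> H"
      if H12: "H1 \<in> F ` {C. finite C \<and> C \<subseteq> \<C>}" "H2 \<in> F ` {C. finite C \<and> C \<subseteq> \<C>}" for H1 H2
    proof -
      obtain C1 C2 where "finite C1" "C1 \<subseteq> \<C>" "H1 = F C1" "finite C2" "C2 \<subseteq> \<C>" "H2 = F C2"
        using H12 by blast
      then have "H1 \<union> H2 \<subseteq> F (C1 \<union> C2)" "F (C1 \<union> C2) \<in> F ` {C. finite C \<and> C \<subseteq> \<C>}"
        unfolding F_def by auto
      then show ?thesis
        by blast
    qed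
  qed
  then obtain p where p: "RO_ultrafilter X p" "\<And>C. finite C \<Longrightarrow> C \<subseteq> \<C> \<Longrightarrow> F C \<subseteq> p"
    by (rule RO_ultrafilter_exists) blast
  have "U \<notin> p" if "U \<in> \<C>" for U
  proof -
    have U: "U \<in> RO X"
      using that \<C> by blast
    then have "X interior_of (topspace X - U) \<in> F {U}"
      using RO_ultrafilter_complement interior_complement_in_RO[OF U] by (auto simp: F_def)
    then show ?thesis
      using p that RO_ultrafilter_complement[OF p(1) U] by blast
  qed
  then show ?thesis
    using p(1) by blast
qed

lemma RO_ultrafilter_avoids_finite:
  assumes p: "RO_ultrafilter X p" and "finite \<U>" "\<U> \<subseteq> RO X" "\<U> \<inter> p = {}"
  shows "\<exists>W\<in>p. W \<inter> \<Union>\<U> = {}"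
  using assms(2-)
proof (induction \<U> rule: finite_induct)
  case empty
  then show ?case
    using RO_ultrafilter_topspace[OF p] by blast
next
  case (insert U \<U>)
  then obtain W1 where "W1 \<in> p" "W1 \<inter> \<Union>\<U> = {}"
    by blast
  moreover obtain W2 where "W2 \<in> p" "W2 \<inter> U = {}"
    using RO_ultrafilter_disjoint_member[OF p] insert.prems by blast
  ultimately show ?case
    using RO_ultrafilter_Int[OF p] by (intro bexI[of _ "W1 \<inter> W2"]) auto
qed

lemma RO_ultrafilter_meets_dense:
  assumes p: "RO_ultrafilter X p" and "finite \<U>" "\<U> \<subseteq> RO X"
    and dense: "X closure_of \<Union>\<U> = topspace X"
  shows "\<U> \<inter> p \<noteq> {}"
proof
  assume "\<U> \<inter> p = {}"
  then obtain W where W: "W \<in> p" "W \<inter> \<Union>\<U> = {}"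
    using RO_ultrafilter_avoids_finite[OF p \<open>finite \<U>\<close> \<open>\<U> \<subseteq> RO X\<close>] by blast
  then have "W \<inter> X closure_of \<Union>\<U> = {}"
    using p by (simp add: openin_Int_closure_of_eq_empty RO_openin RO_ultrafilter_in_RO)
  then have "W = {}"
    using dense W p RO_subset_topspace RO_ultrafilter_in_RO by blast
  then show False
    using W p RO_ultrafilter_Int_nonempty by blast
qed

lemma image_RO_subset_eq:
  assumes hk: "homeomorphic_maps X Y h k" and "F \<subseteq> RO X"
  shows "(\<lambda>U. h ` U) ` F = {U \<in> RO Y. k ` U \<in> F}"
proof (intro equalityI subsetI)
  fix U assume "U \<in> (\<lambda>U. h ` U) ` F"
  then obtain V where V: "V \<in> F" "U = h ` V"
    by blast
  then have "k ` U = V"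
    using V assms homeomorphic_maps_image_cancel[OF hk RO_subset_topspace] by blast
  moreover have "U \<in> RO Y"
    using V assms homeomorphic_image_in_RO[OF homeomorphic_maps_imp_map[OF hk]] by blast
  ultimately show "U \<in> {U \<in> RO Y. k ` U \<in> F}"
    using V by simp
next
  fix U assume U: "U \<in> {U \<in> RO Y. k ` U \<in> F}"
  then have "h ` k ` U = U"
    using homeomorphic_maps_image_cancel[OF homeomorphic_maps_sym[THEN iffD1, OF hk] RO_subset_topspace]
    by simp
  then show "U \<in> (\<lambda>U. h ` U) ` F"
    using U by (metis (no_types, lifting) image_eqI mem_Collect_eq)
qed

lemma mem_image_RO_ultrafilter:
  assumes hk: "homeomorphic_maps X Y h k" and p: "RO_ultrafilter X p" and U: "U \<in> RO Y"
  shows "U \<in> (\<lambda>U. h ` U) ` p \<longleftrightarrow> k ` U \<in> p"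
proof -
  have "p \<subseteq> RO X"
    using p RO_ultrafilter_in_RO by blast
  then show ?thesis
    using image_RO_subset_eq[OF hk] U by blast
qed

lemma image_image_RO_subset:
  assumes hk: "homeomorphic_maps X Y h k" and F: "F \<subseteq> RO X"
  shows "(\<lambda>U. k ` U) ` (\<lambda>U. h ` U) ` F = F"
proof -
  have "(\<lambda>U. k ` U) ` (\<lambda>U. h ` U) ` F = (\<lambda>U. k ` h ` U) ` F"
    by (simp add: image_image)
  also have "\<dots> = (\<lambda>U. U) ` F"
  proof (rule image_cong)
    fix U assume "U \<in> F"
    then show "k ` h ` U = U"
      using F hk by (meson RO_subset_topspace homeomorphic_maps_image_cancel subsetD)
  qed simp
  finally show ?thesis
    by simp
qed

lemma RO_filter_image:
  assumes hk: "homeomorphic_maps X Y h k" and F: "RO_filter X F"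
  shows "RO_filter Y ((\<lambda>U. h ` U) ` F)"
proof -
  have kh: "homeomorphic_maps Y X k h"
    using hk homeomorphic_maps_sym by blast
  have top: "k ` topspace Y = topspace X"
    using homeomorphic_imp_surjective_map[OF homeomorphic_maps_imp_map[OF kh]] .
  have "k ` (A \<inter> B) \<in> F" if "A \<in> RO Y" "B \<in> RO Y" "k ` A \<in> F" "k ` B \<in> F" for A B
  proof -
    have "k ` (A \<inter> B) = k ` A \<inter> k ` B"
      using homeomorphic_maps_image_Int[OF kh] RO_subset_topspace that(1,2) by blast
    then show ?thesis
      using F that(3,4) by (simp add: RO_filter_def)
  qed
  moreover have "k ` B \<in> F" if "A \<in> RO Y" "B \<in> RO Y" "A \<subseteq> B" "k ` A \<in> F" for A B
    using that F homeomorphic_image_in_RO[OF homeomorphic_maps_imp_map[OF kh]]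
    unfolding RO_filter_def by (meson image_mono)
  ultimately show ?thesis
    using F top unfolding image_RO_subset_eq[OF hk RO_filter_def[THEN iffD1, OF F, THEN conjunct1]]
    by (auto simp: RO_filter_def topspace_in_RO RO_Int)
qed

lemma RO_ultrafilter_image:
  assumes hk: "homeomorphic_maps X Y h k" and p: "RO_ultrafilter X p"
  shows "RO_ultrafilter Y ((\<lambda>U. h ` U) ` p)"
  unfolding RO_ultrafilter_def
proof (intro conjI allI impI)
  have kh: "homeomorphic_maps Y X k h"
    using hk homeomorphic_maps_sym by blast
  have pRO: "p \<subseteq> RO X"
    using p RO_ultrafilter_in_RO by blast
  show "RO_filter Y ((\<lambda>U. h ` U) ` p)"
    using RO_filter_image[OF hk] p by (simp add: RO_ultrafilter_def)
  fix F assume F: "RO_filter Y F \<and> (\<lambda>U. h ` U) ` p \<subseteq> F"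
  then have "RO_filter X ((\<lambda>U. k ` U) ` F)"
    using RO_filter_image[OF kh] by blast
  moreover have "p \<subseteq> (\<lambda>U. k ` U) ` F"
    using image_mono[of "(\<lambda>U. h ` U) ` p" F "\<lambda>U. k ` U"] F image_image_RO_subset[OF hk pRO] by simp
  ultimately have "(\<lambda>U. k ` U) ` F = p"
    using p by (simp add: RO_ultrafilter_def)
  then show "F = (\<lambda>U. h ` U) ` p"
    using image_image_RO_subset[OF kh] F by (metis RO_filter_def)
qed

section \<open>The Stone space of the regular open algebra\<close>

lemma compact_space_topology_generated_by:
  assumes top: "\<Union>\<B> \<in> \<B>"
    and fin: "\<And>C. C \<subseteq> \<B> \<Longrightarrow> \<Union>C = \<Union>\<B> \<Longrightarrow> \<exists>C'. finite C' \<and> C' \<subseteq> C \<and> \<Union>C' = \<Union>\<B>"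
  shows "compact_space (topology_generated_by \<B>)"
proof (rule Alexander_subbase[where \<B> = \<B>])
  have "(finite intersection_of (\<lambda>x. x \<in> \<B>) relative_to \<Union>\<B>) = finite' intersection_of (\<lambda>x. x \<in> \<B>)"
  proof (intro ext iffI)
    fix S assume "(finite intersection_of (\<lambda>x. x \<in> \<B>) relative_to \<Union>\<B>) S"
    then obtain C where "finite C" "C \<subseteq> \<B>" "S = \<Union>\<B> \<inter> \<Inter>C"
      by (auto simp: intersection_of_def relative_to_def)
    then show "(finite' intersection_of (\<lambda>x. x \<in> \<B>)) S"
      unfolding intersection_of_def using top by (intro exI[of _ "insert (\<Union>\<B>) C"]) auto
  next
    fix S assume "(finite' intersection_of (\<lambda>x. x \<in> \<B>)) S"
    then obtain C where "finite C" "C \<noteq> {}" "C \<subseteq> \<B>" "S = \<Inter>C"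
      by (auto simp: intersection_of_def)
    then show "(finite intersection_of (\<lambda>x. x \<in> \<B>) relative_to \<Union>\<B>) S"
      unfolding intersection_of_def relative_to_def by (intro exI[of _ S]) blast
  qed
  then show "topology (arbitrary union_of (finite intersection_of (\<lambda>x. x \<in> \<B>) relative_to \<Union>\<B>))
      = topology_generated_by \<B>"
    by (simp add: generate_topology_on_eq)
qed (use fin in simp)

definition Stone_basic :: "'x topology \<Rightarrow> 'x set \<Rightarrow> 'x set set set" where
  "Stone_basic X U = {p. RO_ultrafilter X p \<and> U \<in> p}"

lemma mem_Stone_basic [simp]: "p \<in> Stone_basic X U \<longleftrightarrow> RO_ultrafilter X p \<and> U \<in> p"
  by (simp add: Stone_basic_def)

lemma Stone_basic_topspace: "Stone_basic X (topspace X) = {p. RO_ultrafilter X p}"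
  using RO_ultrafilter_topspace by auto

lemma Union_Stone_basic: "\<Union>(Stone_basic X ` RO X) = {p. RO_ultrafilter X p}"
  using topspace_in_RO Stone_basic_topspace by auto

lemma StoneRO_eq: "StoneRO X = topology_generated_by (Stone_basic X ` RO X)"
proof -
  have "{{p. RO_ultrafilter X p \<and> U \<in> p} | U. U \<in> RO X} = Stone_basic X ` RO X"
    by (auto simp: Stone_basic_def)
  then show ?thesis
    unfolding StoneRO_def by (metis subtopology_topspace Union_Stone_basic topology_generated_by_topspace)
qed

lemma topspace_StoneRO: "topspace (StoneRO X) = {p. RO_ultrafilter X p}"
  by (simp add: StoneRO_eq Union_Stone_basic)

lemma openin_Stone_basic: "U \<in> RO X \<Longrightarrow> openin (StoneRO X) (Stone_basic X U)"
  by (simp add: StoneRO_eq topology_generated_by_Basis)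

lemma closedin_Stone_basic:
  assumes "U \<in> RO X"
  shows "closedin (StoneRO X) (Stone_basic X U)"
proof -
  have "topspace (StoneRO X) - Stone_basic X U = Stone_basic X (X interior_of (topspace X - U))"
    using RO_ultrafilter_complement[OF _ assms] by (auto simp: topspace_StoneRO)
  moreover have "Stone_basic X U \<subseteq> topspace (StoneRO X)"
    by (auto simp: topspace_StoneRO)
  ultimately show ?thesis
    using openin_Stone_basic[OF interior_complement_in_RO[OF assms]] by (simp add: closedin_def)
qed

lemma Hausdorff_space_StoneRO: "Hausdorff_space (StoneRO X)"
  unfolding Hausdorff_space_def topspace_StoneRO
proof (intro allI impI)
  fix p q assume "p \<in> Collect (RO_ultrafilter X) \<and> q \<in> Collect (RO_ultrafilter X) \<and> p \<noteq> q"
  then have p: "RO_ultrafilter X p" and q: "RO_ultrafilter X q" and "p \<noteq> q"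
    by auto
  then have "\<not> p \<subseteq> q"
    by (metis RO_ultrafilter_def)
  then obtain A where A: "A \<in> p" "A \<notin> q"
    by blast
  then obtain W where W: "W \<in> q" "W \<inter> A = {}"
    using RO_ultrafilter_disjoint_member[OF q] RO_ultrafilter_in_RO[OF p] by blast
  have "disjnt (Stone_basic X A) (Stone_basic X W)"
    using W(2) RO_ultrafilter_Int_nonempty by (fastforce simp: disjnt_def)
  moreover have "openin (StoneRO X) (Stone_basic X A)" "openin (StoneRO X) (Stone_basic X W)"
    using p q A W RO_ultrafilter_in_RO openin_Stone_basic by blast+
  moreover have "p \<in> Stone_basic X A" "q \<in> Stone_basic X W"
    using p q A W by simp_all
  ultimately show "\<exists>U V. openin (StoneRO X) U \<and> openin (StoneRO X) V \<and> p \<in> U \<and> q \<in> V \<and> disjnt U V"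
    by blast
qed

lemma compact_space_StoneRO: "compact_space (StoneRO X)"
  unfolding StoneRO_eq
proof (rule compact_space_topology_generated_by)
  show "\<Union>(Stone_basic X ` RO X) \<in> Stone_basic X ` RO X"
    using topspace_in_RO[of X] by (simp add: Union_Stone_basic flip: Stone_basic_topspace)
next
  fix C assume C: "C \<subseteq> Stone_basic X ` RO X" "\<Union>C = \<Union>(Stone_basic X ` RO X)"
  define \<C> where "\<C> = {U \<in> RO X. Stone_basic X U \<in> C}"
  show "\<exists>C'. finite C' \<and> C' \<subseteq> C \<and> \<Union>C' = \<Union>(Stone_basic X ` RO X)"
  proof (rule ccontr)
    assume no_finite_subcover: "\<not> ?thesis"
    have "\<exists>q. RO_ultrafilter X q \<and> D \<inter> q = {}" if "finite D" "D \<subseteq> \<C>" for D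
    proof (rule ccontr)
      assume "\<not> ?thesis"
      then have "\<Union>(Stone_basic X ` D) = \<Union>(Stone_basic X ` RO X)"
        using that by (auto simp: \<C>_def Union_Stone_basic)
      moreover have "Stone_basic X ` D \<subseteq> C"
        using that by (auto simp: \<C>_def)
      ultimately have "\<exists>C'. finite C' \<and> C' \<subseteq> C \<and> \<Union>C' = \<Union>(Stone_basic X ` RO X)"
        using that(1) by (intro exI[of _ "Stone_basic X ` D"]) simp
      then show False
        using no_finite_subcover by blast
    qed
    then obtain p where p: "RO_ultrafilter X p" "\<C> \<inter> p = {}"
      using RO_ultrafilter_avoiding[of \<C> X] by (auto simp: \<C>_def)
    then have "p \<in> \<Union>C"
      using C(2) by (simp add: Union_Stone_basic)
    then obtain U where "U \<in> RO X" "Stone_basic X U \<in> C" "p \<in> Stone_basic X U"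
      using C(1) by auto
    then show False
      using p by (auto simp: \<C>_def)
  qed
qed

lemma continuous_map_StoneRO_image:
  assumes hk: "homeomorphic_maps X Y h k"
  shows "continuous_map (StoneRO X) (StoneRO Y) (\<lambda>p. (\<lambda>U. h ` U) ` p)"
proof -
  have "continuous_map (StoneRO X) (topology_generated_by (Stone_basic Y ` RO Y)) (\<lambda>p. (\<lambda>U. h ` U) ` p)"
  proof (rule continuous_on_generated_topo)
    fix B assume "B \<in> Stone_basic Y ` RO Y"
    then obtain U where U: "U \<in> RO Y" "B = Stone_basic Y U"
      by blast
    have "(\<lambda>p. (\<lambda>U. h ` U) ` p) -` B \<inter> topspace (StoneRO X) = Stone_basic X (k ` U)"
      using U mem_image_RO_ultrafilter[OF hk] RO_ultrafilter_image[OF hk]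
      by (auto simp: topspace_StoneRO)
    moreover have "k ` U \<in> RO X"
      using homeomorphic_image_in_RO[OF homeomorphic_maps_imp_map] hk U(1) homeomorphic_maps_sym by blast
    ultimately show "openin (StoneRO X) ((\<lambda>p. (\<lambda>U. h ` U) ` p) -` B \<inter> topspace (StoneRO X))"
      by (simp add: openin_Stone_basic)
  next
    show "(\<lambda>p. (\<lambda>U. h ` U) ` p) ` topspace (StoneRO X) \<subseteq> \<Union>(Stone_basic Y ` RO Y)"
      using RO_ultrafilter_image[OF hk] by (auto simp: topspace_StoneRO Union_Stone_basic)
  qed
  then show ?thesis
    by (simp only: StoneRO_eq[symmetric])
qed

lemma G_flow_homeomorphic_maps:
  assumes flow: "G_flow G X act" and g: "g \<in> carrier G"
  shows "homeomorphic_maps X X (act g) (act (inv\<^bsub>G\<^esub> g))"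
proof -
  have grp: "group G"
    using flow by (simp add: G_flow_def)
  then have ig: "inv\<^bsub>G\<^esub> g \<in> carrier G"
    using g by simp
  show ?thesis
    unfolding homeomorphic_maps_def
  proof (intro conjI ballI)
    show "continuous_map X X (act g)" "continuous_map X X (act (inv\<^bsub>G\<^esub> g))"
      using flow g ig by (auto simp: G_flow_def)
  next
    fix x assume x: "x \<in> topspace X"
    have "act (inv\<^bsub>G\<^esub> g) (act g x) = act (inv\<^bsub>G\<^esub> g \<otimes>\<^bsub>G\<^esub> g) x"
      using flow g ig x by (simp add: G_flow_def)
    then show "act (inv\<^bsub>G\<^esub> g) (act g x) = x"
      using flow grp g x by (simp add: G_flow_def group.l_inv)
  next
    fix x assume x: "x \<in> topspace X"
    have "act g (act (inv\<^bsub>G\<^esub> g) x) = act (g \<otimes>\<^bsub>G\<^esub> inv\<^bsub>G\<^esub> g) x"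
      using flow g ig x by (simp add: G_flow_def)
    then show "act g (act (inv\<^bsub>G\<^esub> g) x) = x"
      using flow grp g x by (simp add: G_flow_def group.r_inv)
  qed
qed

lemma G_flow_image_one: "G_flow G X act \<Longrightarrow> U \<subseteq> topspace X \<Longrightarrow> act \<one>\<^bsub>G\<^esub> ` U = U"
  by (force simp: G_flow_def subset_eq)

lemma G_flow_image_mult:
  "G_flow G X act \<Longrightarrow> g \<in> carrier G \<Longrightarrow> h \<in> carrier G \<Longrightarrow> U \<subseteq> topspace X
   \<Longrightarrow> act (g \<otimes>\<^bsub>G\<^esub> h) ` U = act g ` act h ` U"
  by (force simp: G_flow_def subset_eq image_image)

lemma StoneRO_act_eq: "StoneRO_act act g = (\<lambda>p. (\<lambda>U. act g ` U) ` p)"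
  by (simp add: StoneRO_act_def fun_eq_iff)

lemma G_flow_StoneRO:
  assumes flow: "G_flow G X act"
  shows "G_flow G (StoneRO X) (StoneRO_act act)"
  unfolding G_flow_def StoneRO_act_eq
proof (intro conjI ballI)
  show "group G"
    using flow by (simp add: G_flow_def)
  show "compact_space (StoneRO X)" "Hausdorff_space (StoneRO X)"
    by (simp_all add: compact_space_StoneRO Hausdorff_space_StoneRO)
next
  fix g assume "g \<in> carrier G"
  then show "continuous_map (StoneRO X) (StoneRO X) (\<lambda>p. (\<lambda>U. act g ` U) ` p)"
    using continuous_map_StoneRO_image G_flow_homeomorphic_maps[OF flow] by blast
next
  fix p assume "p \<in> topspace (StoneRO X)"
  then have "\<And>U. U \<in> p \<Longrightarrow> U \<subseteq> topspace X"
    by (auto simp: topspace_StoneRO dest: RO_ultrafilter_in_RO RO_subset_topspace)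
  then show "(\<lambda>U. act \<one>\<^bsub>G\<^esub> ` U) ` p = p"
    using G_flow_image_one[OF flow] by simp
next
  fix g h p assume gh: "g \<in> carrier G" "h \<in> carrier G" and "p \<in> topspace (StoneRO X)"
  then have "\<And>U. U \<in> p \<Longrightarrow> U \<subseteq> topspace X"
    by (auto simp: topspace_StoneRO dest: RO_ultrafilter_in_RO RO_subset_topspace)
  then show "(\<lambda>U. act (g \<otimes>\<^bsub>G\<^esub> h) ` U) ` p = (\<lambda>U. act g ` U) ` (\<lambda>U. act h ` U) ` p"
    using G_flow_image_mult[OF flow gh] by (simp add: image_image)
qed

section \<open>Displacing families\<close>

definition displacing :: "'x topology \<Rightarrow> ('x \<Rightarrow> 'x) \<Rightarrow> 'x set set \<Rightarrow> bool" where
  "displacing X h \<A> \<longleftrightarrow> \<A> \<subseteq> RO X \<and> (\<forall>p. RO_ultrafilter X p \<longrightarrow> \<A> \<inter> p \<noteq> {})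
     \<and> (\<forall>A\<in>\<A>. A \<inter> h ` A = {})"

lemma displacing_moves_ultrafilter:
  assumes "displacing X h \<A>" "RO_ultrafilter X p"
  shows "\<exists>A\<in>\<A> \<inter> p. h ` A \<notin> p"
proof -
  have "\<A> \<inter> p \<noteq> {}"
    using assms by (simp add: displacing_def)
  then obtain A where "A \<in> \<A>" "A \<in> p"
    by blast
  moreover have "A \<inter> h ` A = {}"
    using assms \<open>A \<in> \<A>\<close> by (simp add: displacing_def)
  ultimately show ?thesis
    using RO_ultrafilter_Int_nonempty[OF assms(2)] by blast
qed

lemma interior_closure_displaced:
  assumes h: "homeomorphic_map X X h" and A: "openin X A" "A \<inter> h ` A = {}"
  shows "X interior_of (X closure_of A) \<inter> h ` (X interior_of (X closure_of A)) = {}"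
proof -
  have "A \<subseteq> topspace X"
    using A openin_subset by blast
  then have "h ` (X interior_of (X closure_of A)) = X interior_of (X closure_of (h ` A))"
    "openin X (h ` A)"
    using homeomorphic_map_interior_closure[OF h] homeomorphic_map_openness[OF h] A by simp_all
  then show ?thesis
    using interior_closure_disjoint A by simp
qed

lemma exists_displaced_RO_subset:
  assumes h: "homeomorphic_map X X h" and "Hausdorff_space X"
    and no_fixed_interior: "X interior_of {x \<in> topspace X. h x = x} = {}"
    and U: "U \<in> RO X" "U \<noteq> {}"
  shows "\<exists>T\<in>RO X. T \<noteq> {} \<and> T \<subseteq> U \<and> T \<inter> h ` T = {}"
proof -
  have "\<not> U \<subseteq> {x \<in> topspace X. h x = x}"
    using interior_of_maximal[OF _ RO_openin[OF U(1)]] no_fixed_interior U(2) by blast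
  then obtain x where x: "x \<in> U" "h x \<noteq> x"
    using RO_subset_topspace[OF U(1)] by blast
  have cont: "continuous_map X X h"
    using h homeomorphic_imp_continuous_map by blast
  have "x \<in> topspace X" "h x \<in> topspace X"
    using x RO_subset_topspace[OF U(1)] continuous_map_image_subset_topspace[OF cont] by blast+
  then obtain O1 O2 where O: "openin X O1" "openin X O2" "x \<in> O1" "h x \<in> O2" "disjnt O1 O2"
    using \<open>Hausdorff_space X\<close> x(2) unfolding Hausdorff_space_def by metis
  define Q where "Q = U \<inter> O1 \<inter> {y \<in> topspace X. h y \<in> O2}"
  have Q: "openin X Q" "x \<in> Q" "Q \<inter> h ` Q = {}"
    using RO_openin[OF U(1)] O openin_continuous_map_preimage[OF cont O(2)] x \<open>x \<in> topspace X\<close>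
    by (auto simp: Q_def disjnt_def)
  define T where "T = X interior_of (X closure_of Q)"
  have "T \<subseteq> X interior_of (X closure_of U)"
    unfolding T_def by (intro interior_of_mono closure_of_mono) (auto simp: Q_def)
  then have "T \<subseteq> U"
    using U(1) by (simp add: RO_def regular_open_def)
  moreover have "T \<noteq> {}"
    using openin_subset_interior_closure[OF Q(1)] Q(2) by (auto simp: T_def)
  ultimately show ?thesis
    using interior_closure_in_RO interior_closure_displaced[OF h Q(1,3)] unfolding T_def by blast
qed

lemma maximal_displaced_RO_exists:
  assumes h: "homeomorphic_map X X h"
  obtains V where "V \<in> RO X" "V \<inter> h ` V = {}"
    "\<And>V'. V' \<in> RO X \<Longrightarrow> V' \<inter> h ` V' = {} \<Longrightarrow> V \<subseteq> V' \<Longrightarrow> V' = V"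
proof -
  have "\<exists>V\<in>{V \<in> RO X. V \<inter> h ` V = {}}. \<forall>V'\<in>{V \<in> RO X. V \<inter> h ` V = {}}. V \<subseteq> V' \<longrightarrow> V' = V"
  proof (rule subset_Zorn)
    fix C assume C: "subset.chain {V \<in> RO X. V \<inter> h ` V = {}} C"
    then have C_displaced: "\<And>V. V \<in> C \<Longrightarrow> V \<in> RO X \<and> V \<inter> h ` V = {}"
      by (auto simp: subset.chain_def)
    have open_Union: "openin X (\<Union>C)"
      using C_displaced RO_openin by blast
    have "\<Union>C \<inter> h ` \<Union>C = {}"
    proof (rule ccontr)
      assume "\<Union>C \<inter> h ` \<Union>C \<noteq> {}"
      then obtain y V1 V2 where "V1 \<in> C" "h y \<in> V1" "V2 \<in> C" "y \<in> V2"
        by blast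
      moreover have "V1 \<subseteq> V2 \<or> V2 \<subseteq> V1"
        using C calculation by (auto simp: subset.chain_def)
      ultimately show False
        using C_displaced by blast
    qed
    then have "X interior_of (X closure_of (\<Union>C)) \<in> {V \<in> RO X. V \<inter> h ` V = {}}"
      using interior_closure_in_RO[of X "\<Union>C"] interior_closure_displaced[OF h open_Union] by simp
    moreover have "\<forall>V\<in>C. V \<subseteq> X interior_of (X closure_of (\<Union>C))"
      using openin_subset_interior_closure[OF open_Union] by blast
    ultimately show "\<exists>U\<in>{V \<in> RO X. V \<inter> h ` V = {}}. \<forall>V\<in>C. V \<subseteq> U"
      by blast
  qed
  then obtain V where V: "V \<in> {V \<in> RO X. V \<inter> h ` V = {}}"
    and maximal: "\<forall>V'\<in>{V \<in> RO X. V \<inter> h ` V = {}}. V \<subseteq> V' \<longrightarrow> V' = V"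
    by (rule bexE)
  show ?thesis
    using that V maximal by blast
qed

lemma exists_RO_disjoint_if_not_dense:
  assumes W: "openin X W" and "X closure_of W \<noteq> topspace X"
  shows "\<exists>T\<in>RO X. T \<noteq> {} \<and> T \<inter> W = {}"
proof -
  define N where "N = topspace X - X closure_of W"
  have N: "openin X N" "N \<noteq> {}"
    using assms closure_of_subset_topspace[of X W] by (auto simp: N_def openin_diff)
  have "W \<inter> N = {}"
    using closure_of_subset[OF openin_subset[OF W]] by (auto simp: N_def)
  then have "X interior_of (X closure_of W) \<inter> X interior_of (X closure_of N) = {}"
    by (rule interior_closure_disjoint[OF W N(1)])
  then show ?thesis
    using interior_closure_in_RO[of X N] openin_subset_interior_closure[OF N(1)]
      openin_subset_interior_closure[OF W] N(2) by blast
qed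

lemma displaced_Un:
  assumes hk: "homeomorphic_maps X X h k" and "V \<inter> h ` V = {}" "T \<inter> h ` T = {}"
    and T: "T \<subseteq> topspace X" "T \<inter> (V \<union> h ` V \<union> k ` V) = {}"
  shows "(V \<union> T) \<inter> h ` (V \<union> T) = {}"
proof -
  have "y \<in> k ` V" if "h y \<in> V" "y \<in> T" for y
    using that hk T(1) by (force simp: homeomorphic_maps_def)
  then have "V \<inter> h ` T = {}"
    using T(2) by blast
  then show ?thesis
    using assms by blast
qed

lemma maximal_displaced_RO_dense:
  assumes hk: "homeomorphic_maps X X h k"
    and small: "\<And>U. U \<in> RO X \<Longrightarrow> U \<noteq> {} \<Longrightarrow> \<exists>T\<in>RO X. T \<noteq> {} \<and> T \<subseteq> U \<and> T \<inter> h ` T = {}"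
    and V: "V \<in> RO X" "V \<inter> h ` V = {}"
    and maximal: "\<And>V'. V' \<in> RO X \<Longrightarrow> V' \<inter> h ` V' = {} \<Longrightarrow> V \<subseteq> V' \<Longrightarrow> V' = V"
  shows "X closure_of (V \<union> h ` V \<union> k ` V) = topspace X"
proof (rule ccontr)
  let ?W = "V \<union> h ` V \<union> k ` V"
  assume "X closure_of ?W \<noteq> topspace X"
  moreover have "openin X (h ` V)" "openin X (k ` V)"
    using homeomorphic_map_openness[OF homeomorphic_maps_imp_map RO_subset_topspace[OF V(1)]]
      hk homeomorphic_maps_sym RO_openin[OF V(1)] by blast+
  then have "openin X ?W"
    using RO_openin[OF V(1)] by blast
  ultimately obtain T0 where T0: "T0 \<in> RO X" "T0 \<noteq> {}" "T0 \<inter> ?W = {}"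
    using exists_RO_disjoint_if_not_dense by blast
  then obtain T where T: "T \<in> RO X" "T \<noteq> {}" "T \<subseteq> T0" "T \<inter> h ` T = {}"
    using small by blast
  then have TW: "T \<inter> ?W = {}"
    using T0(3) by blast
  then have "(V \<union> T) \<inter> h ` (V \<union> T) = {}"
    using displaced_Un[OF hk V(2) T(4) RO_subset_topspace[OF T(1)]] by blast
  moreover have VT_open: "openin X (V \<union> T)"
    using V(1) T(1) RO_openin by blast
  ultimately have "X interior_of (X closure_of (V \<union> T)) = V"
    using maximal[OF interior_closure_in_RO interior_closure_displaced[OF homeomorphic_maps_imp_map[OF hk]]]
      openin_subset_interior_closure[OF VT_open] by blast
  then have "T \<subseteq> V"
    using openin_subset_interior_closure[OF VT_open] by blast
  then show False
    using T(2) TW by blast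
qed

lemma displacing_family_exists:
  assumes hk: "homeomorphic_maps X X h k" and "Hausdorff_space X"
    and no_fixed_interior: "X interior_of {x \<in> topspace X. h x = x} = {}"
  shows "\<exists>\<A>. finite \<A> \<and> displacing X h \<A>"
proof -
  have h: "homeomorphic_map X X h" and k: "homeomorphic_map X X k"
    using hk homeomorphic_maps_map by blast+
  obtain V where V: "V \<in> RO X" "V \<inter> h ` V = {}"
    and maximal: "\<And>V'. V' \<in> RO X \<Longrightarrow> V' \<inter> h ` V' = {} \<Longrightarrow> V \<subseteq> V' \<Longrightarrow> V' = V"
    using maximal_displaced_RO_exists[OF h] by metis
  have dense: "X closure_of (V \<union> h ` V \<union> k ` V) = topspace X"
    using maximal_displaced_RO_dense[OF hk exists_displaced_RO_subset[OF h assms(2-)] V maximal] by blast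
  have V_top: "V \<subseteq> topspace X" "h ` V \<subseteq> topspace X"
    using RO_subset_topspace[OF V(1)] homeomorphic_imp_surjective_map[OF h] by blast+
  have "h ` V \<inter> h ` h ` V = {}"
    using homeomorphic_maps_image_Int[OF hk V_top] V(2) by simp
  moreover have "k ` V \<inter> h ` k ` V = {}"
  proof -
    have kh: "homeomorphic_maps X X k h"
      using hk homeomorphic_maps_sym by blast
    have "h ` k ` V = V" "k ` h ` V = V"
      using homeomorphic_maps_image_cancel[OF kh V_top(1)] homeomorphic_maps_image_cancel[OF hk V_top(1)]
      by simp_all
    moreover have "k ` V \<inter> k ` h ` V = {}"
      using homeomorphic_maps_image_Int[OF homeomorphic_maps_sym[THEN iffD1, OF hk] V_top] V(2) by simp
    ultimately show ?thesis
      by simp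
  qed
  moreover have "{V, h ` V, k ` V} \<subseteq> RO X"
    using V(1) homeomorphic_image_in_RO h k by blast
  moreover have "X closure_of \<Union>{V, h ` V, k ` V} = topspace X"
    using dense by (simp add: Un_assoc)
  then have "{V, h ` V, k ` V} \<inter> p \<noteq> {}" if "RO_ultrafilter X p" for p
    using RO_ultrafilter_meets_dense[OF that _ calculation(3)] by simp
  ultimately have "displacing X h {V, h ` V, k ` V}"
    using V(2) by (simp add: displacing_def)
  then show ?thesis
    by (intro exI[of _ "{V, h ` V, k ` V}"]) simp
qed

lemma essentially_free_displacing:
  assumes flow: "G_flow G X act" and "essentially_free G X act"
    and g: "g \<in> carrier G" "g \<noteq> \<one>\<^bsub>G\<^esub>"
  shows "\<exists>\<A>. finite \<A> \<and> displacing X (act g) \<A>"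
  using displacing_family_exists[OF G_flow_homeomorphic_maps[OF flow g(1)]] assms
  by (simp add: G_flow_def essentially_free_def)

lemma free_flow_StoneRO:
  assumes flow: "G_flow G X act" and "essentially_free G X act"
  shows "free_flow G (StoneRO X) (StoneRO_act act)"
  unfolding free_flow_def StoneRO_act_eq
proof (intro ballI impI)
  fix p g assume p: "p \<in> topspace (StoneRO X)" and g: "g \<in> carrier G"
    and fixed: "(\<lambda>U. act g ` U) ` p = p"
  show "g = \<one>\<^bsub>G\<^esub>"
  proof (rule ccontr)
    assume "g \<noteq> \<one>\<^bsub>G\<^esub>"
    then obtain \<A> where "displacing X (act g) \<A>"
      using essentially_free_displacing[OF assms g] by blast
    moreover have "RO_ultrafilter X p"
      using p by (simp add: topspace_StoneRO)
    ultimately obtain A where "A \<in> p" "act g ` A \<notin> p"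
      using displacing_moves_ultrafilter by blast
    then show False
      using fixed by blast
  qed
qed

section \<open>A free metrizable factor\<close>

lemma continuous_map_if_clopen:
  assumes "closedin X {x \<in> topspace X. P x}" "openin X {x \<in> topspace X. P x}"
  shows "continuous_map X euclidean (\<lambda>x. if P x then a else b)"
proof (rule continuous_map_cases_alt[where f = "\<lambda>x. a" and g = "\<lambda>x. b"])
  fix x assume "x \<in> X frontier_of {x \<in> topspace X. P x}"
  then show "a = b"
    using clopenin_eq_frontier_of[of X "{x \<in> topspace X. P x}"] assms by simp
qed auto

lemma metrizable_space_pullback_topology:
  assumes f: "inj_on f A" "f ` A \<subseteq> topspace Y" and "metrizable_space Y"
  shows "metrizable_space (pullback_topology A f Y)"
proof -
  have top: "topspace (pullback_topology A f Y) = A"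
    using f(2) by (auto simp: topspace_pullback_topology)
  have "homeomorphic_map (pullback_topology A f Y) (subtopology Y (f ` A)) f"
  proof (rule bijective_open_imp_homeomorphic_map)
    have "continuous_map (pullback_topology A f Y) Y (id \<circ> f)"
      by (rule continuous_map_pullback) simp
    then show "continuous_map (pullback_topology A f Y) (subtopology Y (f ` A)) f"
      by (simp add: continuous_map_in_subtopology top)
    show "open_map (pullback_topology A f Y) (subtopology Y (f ` A)) f"
      unfolding open_map_def openin_pullback_topology openin_subtopology by auto
    show "f ` topspace (pullback_topology A f Y) = topspace (subtopology Y (f ` A))"
      using f(2) top by auto
    show "inj_on f (topspace (pullback_topology A f Y))"
      using f(1) top by simp
  qed
  then show ?thesis
    using homeomorphic_map_imp_homeomorphic_space homeomorphic_metrizable_space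
      metrizable_space_subtopology \<open>metrizable_space Y\<close> by blast
qed

lemma factor_map_onto_Hausdorff:
  assumes flow: "G_flow G Y actY" and f: "continuous_map Y Z f" "f ` topspace Y = topspace Z"
    and "Hausdorff_space Z"
    and equivariant: "\<And>g y. g \<in> carrier G \<Longrightarrow> y \<in> topspace Y \<Longrightarrow> f (actY g y) = actZ g (f y)"
  shows "factor_map G Y actY Z actZ f"
proof -
  have "compact_space Y"
    using flow by (simp add: G_flow_def)
  then have quotient: "quotient_map Y Z f"
    using continuous_imp_quotient_map f \<open>Hausdorff_space Z\<close> by blast
  have "compact_space Z"
    using image_compactin[OF \<open>compact_space Y\<close>[unfolded compact_space_def] f(1)] f(2)
    by (simp add: compact_space_def)
  moreover have "continuous_map Z Z (actZ g)" if g: "g \<in> carrier G" for g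
  proof (rule continuous_compose_quotient_map[OF quotient])
    have "continuous_map Y Z (f \<circ> actY g)"
      using flow g f(1) by (auto simp: G_flow_def intro: continuous_map_compose)
    then show "continuous_map Y Z (actZ g \<circ> f)"
      by (rule continuous_map_eq) (simp add: equivariant g)
  qed
  moreover have "actZ \<one>\<^bsub>G\<^esub> z = z" if z: "z \<in> topspace Z" for z
  proof -
    obtain y where "y \<in> topspace Y" "z = f y"
      using z f(2) by blast
    then show ?thesis
      using flow equivariant[of "\<one>\<^bsub>G\<^esub>" y] by (simp add: G_flow_def group.is_monoid monoid.one_closed)
  qed
  moreover have "actZ (g \<otimes>\<^bsub>G\<^esub> h) z = actZ g (actZ h z)"
    if "g \<in> carrier G" "h \<in> carrier G" and z: "z \<in> topspace Z" for g h z
  proof -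
    obtain y where y: "y \<in> topspace Y" "z = f y"
      using z f(2) by blast
    moreover have "g \<otimes>\<^bsub>G\<^esub> h \<in> carrier G"
      using flow that(1,2) by (simp add: G_flow_def group.is_monoid monoid.m_closed)
    moreover have "actY h y \<in> topspace Y"
      using flow that(2) y(1) continuous_map_image_subset_topspace by (fastforce simp: G_flow_def)
    ultimately show ?thesis
      using flow that(1,2) by (simp add: G_flow_def flip: equivariant)
  qed
  ultimately show ?thesis
    using flow f \<open>Hausdorff_space Z\<close> equivariant by (simp add: factor_map_def G_flow_def)
qed

locale RO_invariant_family =
  fixes G :: "('g, 'b) monoid_scheme" and X :: "'x topology" and act :: "'g \<Rightarrow> 'x \<Rightarrow> 'x"
    and \<B> :: "'x set set"
  assumes flow: "G_flow G X act"
    and subset_RO: "\<B> \<subseteq> RO X"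
    and countable: "countable \<B>"
    and nonempty: "\<B> \<noteq> {}"
    and invariant: "\<And>g B. g \<in> carrier G \<Longrightarrow> B \<in> \<B> \<Longrightarrow> act g ` B \<in> \<B>"
begin

text \<open>The singleton only serves to land in the point type \<open>'x set set set\<close> prescribed for the
  factor.\<close>

definition trace :: "'x set set \<Rightarrow> 'x set set set" where
  "trace p = {p \<inter> \<B>}"

text \<open>\<open>from_nat_into \<B>\<close> enumerates all of \<open>\<B>\<close> only because \<open>\<B>\<close> is countable and nonempty.\<close>

definition indicators :: "'x set set set \<Rightarrow> nat \<Rightarrow> real" where
  "indicators a n = (if from_nat_into \<B> n \<in> \<Union>a then 1 else 0)"

definition Z :: "'x set set set topology" where
  "Z = pullback_topology (trace ` topspace (StoneRO X)) indicators euclidean"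

definition actZ :: "'g \<Rightarrow> 'x set set set \<Rightarrow> 'x set set set" where
  "actZ g a = trace (StoneRO_act act g (\<Union>a))"

lemma topspace_Z: "topspace Z = trace ` topspace (StoneRO X)"
  by (simp add: Z_def topspace_pullback_topology)

lemma image_Int_invariant:
  assumes p: "RO_ultrafilter X p" and g: "g \<in> carrier G"
  shows "(\<lambda>U. act g ` U) ` (p \<inter> \<B>) = (\<lambda>U. act g ` U) ` p \<inter> \<B>"
proof (intro equalityI subsetI)
  fix W assume "W \<in> (\<lambda>U. act g ` U) ` (p \<inter> \<B>)"
  then show "W \<in> (\<lambda>U. act g ` U) ` p \<inter> \<B>"
    using invariant[OF g] by blast
next
  fix W assume W: "W \<in> (\<lambda>U. act g ` U) ` p \<inter> \<B>"
  then obtain U where U: "U \<in> p" "W = act g ` U"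
    by blast
  have "U = act (inv\<^bsub>G\<^esub> g) ` W"
    using U homeomorphic_maps_image_cancel[OF G_flow_homeomorphic_maps[OF flow g]]
      RO_subset_topspace RO_ultrafilter_in_RO[OF p] by metis
  moreover have "inv\<^bsub>G\<^esub> g \<in> carrier G"
    using flow g by (simp add: G_flow_def)
  ultimately have "U \<in> \<B>"
    using invariant W by blast
  then show "W \<in> (\<lambda>U. act g ` U) ` (p \<inter> \<B>)"
    using U by blast
qed

lemma trace_equivariant:
  "RO_ultrafilter X p \<Longrightarrow> g \<in> carrier G \<Longrightarrow> trace (StoneRO_act act g p) = actZ g (trace p)"
  by (simp add: actZ_def trace_def StoneRO_act_def image_Int_invariant)

lemma indicators_trace: "indicators (trace p) n = (if from_nat_into \<B> n \<in> p then 1 else 0)"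
  using from_nat_into[OF nonempty] by (simp add: indicators_def trace_def)

lemma continuous_map_trace: "continuous_map (StoneRO X) Z trace"
  unfolding Z_def
proof (rule continuous_map_pullback')
  have "continuous_map (StoneRO X) euclidean (\<lambda>p. if from_nat_into \<B> n \<in> p then 1 else (0::real))" for n
  proof (rule continuous_map_if_clopen)
    have B: "from_nat_into \<B> n \<in> RO X"
      using from_nat_into[OF nonempty] subset_RO by blast
    moreover have "{p \<in> topspace (StoneRO X). from_nat_into \<B> n \<in> p} = Stone_basic X (from_nat_into \<B> n)"
      by (auto simp: topspace_StoneRO)
    ultimately show "closedin (StoneRO X) {p \<in> topspace (StoneRO X). from_nat_into \<B> n \<in> p}"
      "openin (StoneRO X) {p \<in> topspace (StoneRO X). from_nat_into \<B> n \<in> p}"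
      by (simp_all add: closedin_Stone_basic openin_Stone_basic)
  qed
  then have "continuous_map (StoneRO X) (product_topology (\<lambda>n. euclidean) UNIV) (indicators \<circ> trace)"
    by (simp add: continuous_map_componentwise_UNIV indicators_trace)
  then show "continuous_map (StoneRO X) euclidean (indicators \<circ> trace)"
    by (simp add: euclidean_product_topology)
qed auto

lemma inj_on_indicators: "inj_on indicators (trace ` topspace (StoneRO X))"
proof (rule inj_onI)
  fix a b assume "a \<in> trace ` topspace (StoneRO X)" "b \<in> trace ` topspace (StoneRO X)"
    and eq: "indicators a = indicators b"
  then obtain p q where a: "a = trace p" and b: "b = trace q"
    by blast
  have "p \<inter> \<B> = q \<inter> \<B>"
  proof -
    have "from_nat_into \<B> n \<in> p \<longleftrightarrow> from_nat_into \<B> n \<in> q" for n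
      using fun_cong[OF eq, of n] by (simp add: a b indicators_trace split: if_splits)
    moreover have "\<And>B. B \<in> \<B> \<Longrightarrow> \<exists>n. B = from_nat_into \<B> n"
      using range_from_nat_into[OF nonempty countable] by (metis rangeE)
    ultimately show ?thesis
      by blast
  qed
  then show "a = b"
    by (simp add: a b trace_def)
qed

lemma metrizable_space_Z: "metrizable_space Z"
  unfolding Z_def
  by (rule metrizable_space_pullback_topology[OF inj_on_indicators]) (simp_all add: metrizable_space_euclidean)

lemma factor_map_trace: "factor_map G (StoneRO X) (StoneRO_act act) Z actZ trace"
  by (rule factor_map_onto_Hausdorff[OF G_flow_StoneRO[OF flow] continuous_map_trace])
    (simp_all add: topspace_Z metrizable_imp_Hausdorff_space[OF metrizable_space_Z]
      trace_equivariant topspace_StoneRO)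

lemma free_flow_Z:
  assumes witnesses: "\<And>g. g \<in> carrier G \<Longrightarrow> g \<noteq> \<one>\<^bsub>G\<^esub> \<Longrightarrow> \<exists>\<A>\<subseteq>\<B>. displacing X (act g) \<A>"
  shows "free_flow G Z actZ"
  unfolding free_flow_def
proof (intro ballI impI)
  fix a g assume "a \<in> topspace Z" and g: "g \<in> carrier G" and fixed: "actZ g a = a"
  then obtain p where p: "RO_ultrafilter X p" and a: "a = trace p"
    by (auto simp: topspace_Z topspace_StoneRO)
  then have fixed_trace: "(\<lambda>U. act g ` U) ` p \<inter> \<B> = p \<inter> \<B>"
    using fixed trace_equivariant[OF p g] by (simp add: trace_def StoneRO_act_eq)
  show "g = \<one>\<^bsub>G\<^esub>"
  proof (rule ccontr)
    assume "g \<noteq> \<one>\<^bsub>G\<^esub>"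
    then obtain \<A> where "\<A> \<subseteq> \<B>" "displacing X (act g) \<A>"
      using witnesses g by blast
    then obtain A where "A \<in> \<B>" "A \<in> p" "act g ` A \<notin> p"
      using displacing_moves_ultrafilter[OF _ p] by blast
    then show False
      using fixed_trace invariant[OF g] by blast
  qed
qed

end

definition orbit_family :: "('g, 'b) monoid_scheme \<Rightarrow> ('g \<Rightarrow> 'x \<Rightarrow> 'x) \<Rightarrow> 'x set set \<Rightarrow> 'x set set" where
  "orbit_family G act \<S> = (\<Union>g\<in>carrier G. (\<lambda>A. act g ` A) ` \<S>)"

lemma subset_orbit_family:
  assumes "G_flow G X act" "\<S> \<subseteq> RO X"
  shows "\<S> \<subseteq> orbit_family G act \<S>"
proof
  fix A assume "A \<in> \<S>"
  then have "A \<subseteq> topspace X"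
    using assms(2) RO_subset_topspace by blast
  then have "A = act \<one>\<^bsub>G\<^esub> ` A"
    using G_flow_image_one[OF assms(1)] by simp
  moreover have "\<one>\<^bsub>G\<^esub> \<in> carrier G"
    using assms(1) by (simp add: G_flow_def group.is_monoid monoid.one_closed)
  ultimately show "A \<in> orbit_family G act \<S>"
    using \<open>A \<in> \<S>\<close> unfolding orbit_family_def by blast
qed

lemma RO_invariant_family_orbit_family:
  assumes flow: "G_flow G X act" and \<S>: "\<S> \<subseteq> RO X" "countable \<S>" "\<S> \<noteq> {}"
    and "countable (carrier G)"
  shows "RO_invariant_family G X act (orbit_family G act \<S>)"
proof
  show "G_flow G X act"
    by (rule flow)
  show "orbit_family G act \<S> \<subseteq> RO X"
    using \<S>(1) homeomorphic_image_in_RO homeomorphic_maps_imp_map[OF G_flow_homeomorphic_maps[OF flow]]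
    by (fastforce simp: orbit_family_def)
  show "countable (orbit_family G act \<S>)"
    unfolding orbit_family_def using assms by blast
  show "orbit_family G act \<S> \<noteq> {}"
    using subset_orbit_family[OF flow \<S>(1)] \<S>(3) by blast
next
  fix g B assume g: "g \<in> carrier G" and "B \<in> orbit_family G act \<S>"
  then obtain h A where h: "h \<in> carrier G" and A: "A \<in> \<S>" "B = act h ` A"
    by (auto simp: orbit_family_def)
  moreover have "A \<subseteq> topspace X"
    using A(1) \<S>(1) RO_subset_topspace by blast
  ultimately have "act g ` B = act (g \<otimes>\<^bsub>G\<^esub> h) ` A"
    using G_flow_image_mult[OF flow g h] by simp
  moreover have "g \<otimes>\<^bsub>G\<^esub> h \<in> carrier G"
    using flow g h by (simp add: G_flow_def group.is_monoid monoid.m_closed)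
  ultimately show "act g ` B \<in> orbit_family G act \<S>"
    using A unfolding orbit_family_def by blast
qed

lemma countable_free_metrizable_factor:
  fixes X :: "'x topology"
  assumes flow: "G_flow G X act" and free: "essentially_free G X act"
    and "countable (carrier G)"
  shows "\<exists>(Z :: 'x set set set topology) actZ f.
           factor_map G (StoneRO X) (StoneRO_act act) Z actZ f \<and> metrizable_space Z \<and> free_flow G Z actZ"
proof -
  obtain \<A> where \<A>: "\<And>g. g \<in> carrier G \<Longrightarrow> g \<noteq> \<one>\<^bsub>G\<^esub> \<Longrightarrow> finite (\<A> g) \<and> displacing X (act g) (\<A> g)"
    using essentially_free_displacing[OF flow free] by metis
  \<comment> \<open>\<open>topspace X\<close> only keeps \<open>\<S>\<close> nonempty when \<open>G\<close> is trivial.\<close>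
  define \<S> where "\<S> = insert (topspace X) (\<Union>g\<in>carrier G - {\<one>\<^bsub>G\<^esub>}. \<A> g)"
  have "\<S> \<subseteq> RO X"
    using \<A> topspace_in_RO[of X] unfolding \<S>_def displacing_def by blast
  moreover have "countable \<S>"
    unfolding \<S>_def using \<A> \<open>countable (carrier G)\<close>
    by (intro countable_insert countable_UN) (auto intro: countable_finite)
  moreover have "\<S> \<noteq> {}"
    by (simp add: \<S>_def)
  ultimately have \<S>: "\<S> \<subseteq> RO X" "countable \<S>" "\<S> \<noteq> {}"
    by blast+
  interpret RO_invariant_family G X act "orbit_family G act \<S>"
    by (rule RO_invariant_family_orbit_family[OF flow \<S> \<open>countable (carrier G)\<close>])
  have "free_flow G Z actZ"
  proof (rule free_flow_Z)
    fix g assume "g \<in> carrier G" "g \<noteq> \<one>\<^bsub>G\<^esub>"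
    then have "\<A> g \<subseteq> orbit_family G act \<S>"
      using subset_orbit_family[OF flow \<S>(1)] by (auto simp: \<S>_def)
    then show "\<exists>\<A>'\<subseteq>orbit_family G act \<S>. displacing X (act g) \<A>'"
      using \<A> \<open>g \<in> carrier G\<close> \<open>g \<noteq> \<one>\<^bsub>G\<^esub>\<close> by blast
  qed
  then show ?thesis
    using factor_map_trace metrizable_space_Z by blast
qed

theorem proposition8p3:
  fixes G :: "('g, 'b) monoid_scheme"
    and X :: "'x topology"
    and act :: "'g \<Rightarrow> 'x \<Rightarrow> 'x"
  assumes "minimal_flow G X act"
    and "essentially_free G X act"
  shows "G_flow G (StoneRO X) (StoneRO_act act)
       \<and> free_flow G (StoneRO X) (StoneRO_act act)
       \<and> (countable (carrier G) \<longrightarrow>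
           (\<exists>(Z :: 'x set set set topology) actZ f.
              factor_map G (StoneRO X) (StoneRO_act act) Z actZ f
              \<and> metrizable_space Z \<and> free_flow G Z actZ))"
proof -
  have flow: "G_flow G X act"
    using assms(1) by (simp add: minimal_flow_def)
  then show ?thesis
    using G_flow_StoneRO free_flow_StoneRO countable_free_metrizable_factor assms(2) by blast
qed

end
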